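(* In the setting below, consider the limiting optimal energy efficiency as a function of the spectral efficiency $\mathrm{SE}\in(0,R_{\mathrm{max}}/(1+\alpha_{\mathrm{rol}})]$: $$\mathrm{EE}_\infty(\mathrm{SE})=\begin{cases}\dfrac{B\,\mathrm{SE}}{P_{\mathrm{sleep}}+\mathrm{SE}\frac{1+\alpha_{\mathrm{rol}}}{\tilde R}(P_0-P_{\mathrm{sleep}}+\gamma\tilde P^{\alpha})}, & \mathrm{SE}\le \tilde R/(1+\alpha_{\mathrm{rol}}),\\[2mm] \dfrac{B\,\mathrm{SE}}{P_0+\gamma\sigma^{2\alpha}(2^{\mathrm{SE}(1+\alpha_{\mathrm{rol}})}-1)^{\alpha}}, & \mathrm{SE}> \tilde R/(1+\alpha_{\mathrm{rol}}).\end{cases}$$ Then: (i) if $R_{\mathrm{a}}\ge R_{\mathrm{max}}$, $\mathrm{EE}_\infty$ is maximized at $\bar{\mathrm{SE}}=\mathrm{SE}_{\mathrm{max}}=R_{\mathrm{max}}/(1+\alpha_{\mathrm{rol}})$, with maximal value $\mathrm{EE}_{\mathrm{max}}=\frac{B\,\mathrm{SE}_{\mathrm{max}}}{P_0+\gamma P_{\mathrm{max}}^{\alpha}}$; (ii) if $R_{\mathrm{a}}<R_{\mathrm{max}}$, $\mathrm{EE}_\infty$ is maximized at $\bar{\mathrm{SE}}=\bar R/(1+\alpha_{\mathrm{rol}})$, where $\bar R$ is a minimizer over $x\in[R_{\mathrm{a}},R_{\mathrm{max}}]$ of the convex function $\frac{P_0+\gamma\sigma^{2\alpha}(2^{x}-1)^{\alpha}}{x}$,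 with maximal value $\mathrm{EE}_{\mathrm{max}}=\frac{B\,\bar{\mathrm{SE}}}{P_0+\gamma\sigma^{2\alpha}(2^{\bar R}-1)^{\alpha}}$.
   Context: Parameters: $T>0$, $\alpha_{\mathrm{rol}}\in[0,1]$, $B=(1+\alpha_{\mathrm{rol}})/T$, $\sigma^2>0$, $P_{\mathrm{max}}\in(0,\infty)$, $\alpha\in(0,1]$, $\gamma>0$, $P_0\ge0$, constant sleep power $P_{\mathrm{sleep}}\in[0,P_0]$. Definitions: $R_{\mathrm{max}}=\log_2(1+P_{\mathrm{max}}/\sigma^2)$; $R_{\mathrm{a}}$ is a minimizer over $x>0$ of $\frac{P_0-P_{\mathrm{sleep}}+\gamma\sigma^{2\alpha}(2^x-1)^{\alpha}}{x}$ (with $R_{\mathrm{a}}=0$ if $P_0=P_{\mathrm{sleep}},\alpha=1$); $P_{\mathrm{a}}=(2^{R_{\mathrm{a}}}-1)\sigma^2$; $\tilde R=\min(R_{\mathrm{a}},R_{\mathrm{max}})$; $\tilde P=\min(P_{\mathrm{a}},P_{\mathrm{max}})$. (The function $\mathrm{EE}_\infty$ is the large-$N$ limit of the optimal energy efficiency $R/(T P^\star_{\mathrm{cons}})$ for the single-user frame-based power minimization problem with rate $R=\mathrm{SE}(1+\alpha_{\mathrm{rol}})$.) *)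

theory Defs
  imports Complex_Main
begin

definition bandwidth :: "real \<Rightarrow> real \<Rightarrow> real" where
  "bandwidth T arol = (1 + arol) / T"

definition Rmax :: "real \<Rightarrow> real \<Rightarrow> real" where
  "Rmax sigma2 Pmax = log 2 (1 + Pmax / sigma2)"

definition fa :: "real \<Rightarrow> real \<Rightarrow> real \<Rightarrow> real \<Rightarrow> real \<Rightarrow> real \<Rightarrow> real" where
  "fa sigma2 alpha gamma P0 Psleep x =
     (P0 - Psleep + gamma * sigma2 powr alpha * (2 powr x - 1) powr alpha) / x"

definition gbar :: "real \<Rightarrow> real \<Rightarrow> real \<Rightarrow> real \<Rightarrow> real \<Rightarrow> real" where
  "gbar sigma2 alpha gamma P0 x =
     (P0 + gamma * sigma2 powr alpha * (2 powr x - 1) powr alpha) / x"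

definition Pa :: "real \<Rightarrow> real \<Rightarrow> real" where
  "Pa sigma2 Ra = (2 powr Ra - 1) * sigma2"

definition Rtilde :: "real \<Rightarrow> real \<Rightarrow> real \<Rightarrow> real" where
  "Rtilde sigma2 Pmax Ra = min Ra (Rmax sigma2 Pmax)"

definition Ptilde :: "real \<Rightarrow> real \<Rightarrow> real \<Rightarrow> real" where
  "Ptilde sigma2 Pmax Ra = min (Pa sigma2 Ra) Pmax"

definition is_Ra :: "real \<Rightarrow> real \<Rightarrow> real \<Rightarrow> real \<Rightarrow> real \<Rightarrow> real \<Rightarrow> bool" where
  "is_Ra sigma2 alpha gamma P0 Psleep Ra \<longleftrightarrow>
     (if P0 = Psleep \<and> alpha = 1 then Ra = 0
      else Ra > 0 \<and> (\<forall>x>0. fa sigma2 alpha gamma P0 Psleep Ra \<le> fa sigma2 alpha gamma P0 Psleep x))"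

definition EE_inf :: "real \<Rightarrow> real \<Rightarrow> real \<Rightarrow> real \<Rightarrow> real \<Rightarrow> real \<Rightarrow> real \<Rightarrow> real \<Rightarrow> real \<Rightarrow> real \<Rightarrow> real" where
  "EE_inf T arol sigma2 Pmax alpha gamma P0 Psleep Ra SE =
     (let B = bandwidth T arol; Rt = Rtilde sigma2 Pmax Ra; Pt = Ptilde sigma2 Pmax Ra in
      if SE \<le> Rt / (1 + arol)
      then B * SE / (Psleep + SE * (1 + arol) / Rt * (P0 - Psleep + gamma * Pt powr alpha))
      else B * SE / (P0 + gamma * sigma2 powr alpha * (2 powr (SE * (1 + arol)) - 1) powr alpha))"

end

theory Submission
  imports Defs
begin

text \<open>On the affine branch SE \<le> Rtilde/(1+arol) the denominator of EE is
  Psleep + k SE with Psleep \<ge> 0, so EE is increasing there; at SE = Rtilde/(1+arol)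
  both branches agree, because Ptilde is exactly the power (2^Rtilde - 1) sigma^2
  needed for rate Rtilde. Hence EE is maximised on [Rtilde/(1+arol), SEmax], where
  EE(x/(1+arol)) is the positive constant B/(1+arol) divided by gbar x, and maximising EE
  means minimising gbar over [Rtilde, Rmax]. If R_a \<ge> Rmax this interval is the
  single point Rmax.\<close>

lemma divide_affine_mono:
  fixes s t a k :: real
  assumes "0 < s" "s \<le> t" "0 \<le> a" "0 \<le> k" "0 < a + s * k"
  shows "s / (a + s * k) \<le> t / (a + t * k)"
proof -
  have "0 < a + t * k"
    using assms mult_right_mono[of s t k] by linarith
  moreover have "s * (a + t * k) \<le> t * (a + s * k)"
    using mult_right_mono[OF \<open>s \<le> t\<close> \<open>0 \<le> a\<close>] by (simp add: algebra_simps)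
  ultimately show ?thesis
    using assms by (simp add: divide_simps)
qed

lemma Pa_Rmax:
  assumes "0 < sigma2" "0 < Pmax"
  shows "Pa sigma2 (Rmax sigma2 Pmax) = Pmax"
  using assms by (simp add: Pa_def Rmax_def add_pos_pos)

lemma Rmax_pos:
  assumes "0 < sigma2" "0 < Pmax"
  shows "0 < Rmax sigma2 Pmax"
proof -
  have "1 < 1 + Pmax / sigma2" using assms by simp
  then show ?thesis by (simp add: Rmax_def)
qed

lemma Pa_mono:
  assumes "0 < sigma2" "R \<le> R'"
  shows "Pa sigma2 R \<le> Pa sigma2 R'"
  using assms by (simp add: Pa_def)

lemma Ptilde_eq_Pa_Rtilde:
  assumes "0 < sigma2" "0 < Pmax"
  shows "Ptilde sigma2 Pmax Ra = Pa sigma2 (Rtilde sigma2 Pmax Ra)"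
  using Pa_mono[OF assms(1), of Ra "Rmax sigma2 Pmax"]
    Pa_mono[OF assms(1), of "Rmax sigma2 Pmax" Ra]
  by (cases "Ra \<le> Rmax sigma2 Pmax") (auto simp: Ptilde_def Rtilde_def Pa_Rmax[OF assms])

lemma Pa_powr:
  assumes "0 < sigma2" "0 \<le> R"
  shows "Pa sigma2 R powr alpha = sigma2 powr alpha * (2 powr R - 1) powr alpha"
  using assms ge_one_powr_ge_zero[of 2 R] by (simp add: Pa_def powr_mult mult.commute)

lemma is_Ra_nonneg: "is_Ra sigma2 alpha gamma P0 Psleep Ra \<Longrightarrow> 0 \<le> Ra"
  unfolding is_Ra_def by (auto split: if_splits)

locale ee_setting =
  fixes T arol sigma2 Pmax alpha gamma P0 Psleep Ra :: real
  assumes T_pos: "0 < T" and arol_nonneg: "0 \<le> arol"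
    and sigma2_pos: "0 < sigma2" and Pmax_pos: "0 < Pmax" and gamma_pos: "0 < gamma"
    and Psleep_nonneg: "0 \<le> Psleep" and Psleep_le_P0: "Psleep \<le> P0"
    and Ra_nonneg: "0 \<le> Ra"
begin

abbreviation "EE \<equiv> EE_inf T arol sigma2 Pmax alpha gamma P0 Psleep Ra"
abbreviation "Rt \<equiv> Rtilde sigma2 Pmax Ra"
abbreviation "B \<equiv> bandwidth T arol"
abbreviation "c \<equiv> 1 + arol"

lemma c_pos: "0 < c"
  using arol_nonneg by simp

lemma B_pos: "0 < B"
  using T_pos arol_nonneg by (simp add: bandwidth_def)

lemma Rt_nonneg: "0 \<le> Rt"
  using Ra_nonneg Rmax_pos[OF sigma2_pos Pmax_pos] by (simp add: Rtilde_def)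

lemma gbar_pos:
  assumes "0 < x"
  shows "0 < gbar sigma2 alpha gamma P0 x"
proof -
  have "0 < gamma * sigma2 powr alpha * (2 powr x - 1) powr alpha"
    using assms sigma2_pos gamma_pos by simp
  then show ?thesis
    using assms Psleep_nonneg Psleep_le_P0 by (simp add: gbar_def)
qed

lemma EE_below_Rt:
  assumes "SE \<le> Rt / c"
  shows "EE SE = B * SE / (Psleep + SE * (c / Rt *
           (P0 - Psleep + gamma * Ptilde sigma2 Pmax Ra powr alpha)))"
  using assms by (simp add: EE_inf_def Let_def)

lemma EE_mono_below_Rt:
  assumes "0 < s" "s \<le> t" "t \<le> Rt / c"
  shows "EE s \<le> EE t"
proof -
  define k where "k = c / Rt * (P0 - Psleep + gamma * Ptilde sigma2 Pmax Ra powr alpha)"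
  have "0 < Rt / c"
    using assms by linarith
  then have "0 < Rt"
    using c_pos by (simp add: zero_less_divide_iff)
  then have "0 < k"
    using c_pos gamma_pos Psleep_le_P0 Ptilde_eq_Pa_Rtilde[OF sigma2_pos Pmax_pos]
      Pa_powr[OF sigma2_pos Rt_nonneg, of alpha] sigma2_pos
    by (simp add: k_def Pa_def add_nonneg_pos)
  then have "s / (Psleep + s * k) \<le> t / (Psleep + t * k)"
    using assms Psleep_nonneg by (intro divide_affine_mono) (auto simp: add_nonneg_pos)
  then have "B * (s / (Psleep + s * k)) \<le> B * (t / (Psleep + t * k))"
    using B_pos by (intro mult_left_mono) auto
  then show ?thesis
    using assms EE_below_Rt[of s] EE_below_Rt[of t] by (simp add: k_def)
qed

lemma EE_from_Rt:
  assumes "Rt \<le> x" "0 < x"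
  shows "EE (x / c) = B * (x / c) / (P0 + gamma * sigma2 powr alpha * (2 powr x - 1) powr alpha)"
proof (cases "x = Rt")
  case True
  have "gamma * Ptilde sigma2 Pmax Ra powr alpha
        = gamma * sigma2 powr alpha * (2 powr x - 1) powr alpha"
    using True Ptilde_eq_Pa_Rtilde[OF sigma2_pos Pmax_pos] Pa_powr[OF sigma2_pos Rt_nonneg]
    by simp
  then show ?thesis
    using True assms c_pos EE_below_Rt[of "x / c"] by simp
next
  case False
  then have "Rt / c < x / c"
    using assms c_pos by (simp add: divide_strict_right_mono)
  then show ?thesis
    by (simp add: EE_inf_def Let_def)
qed

lemma EE_le_EE_max_Rt:
  assumes "0 < SE"
  shows "EE SE \<le> EE (max (SE * c) Rt / c)"
proof (cases "Rt \<le> SE * c")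
  case True
  then show ?thesis using c_pos by simp
next
  case False
  then show ?thesis
    using assms c_pos by (intro EE_mono_below_Rt) (auto simp: field_simps)
qed

lemma EE_le_of_gbar_le:
  assumes "Rt \<le> x" "0 < x" "Rt \<le> y" "0 < y"
    and "gbar sigma2 alpha gamma P0 y \<le> gbar sigma2 alpha gamma P0 x"
  shows "EE (x / c) \<le> EE (y / c)"
proof -
  have "EE (z / c) = B / c / gbar sigma2 alpha gamma P0 z" if "Rt \<le> z" "0 < z" for z
    using EE_from_Rt[OF that] by (simp add: gbar_def field_simps)
  then show ?thesis
    using assms gbar_pos B_pos c_pos by (simp add: divide_left_mono)
qed

abbreviation "SEmax \<equiv> Rmax sigma2 Pmax / c"

lemma SEmax_range_iff: "SE \<in> {0<..SEmax} \<longleftrightarrow> 0 < SE * c \<and> SE * c \<le> Rmax sigma2 Pmax"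
  using c_pos by (auto simp: pos_le_divide_eq zero_less_mult_iff)

lemma EE_max_at_SEmax:
  assumes "Rmax sigma2 Pmax \<le> Ra"
  shows "(\<forall>SE\<in>{0<..SEmax}. EE SE \<le> EE SEmax) \<and>
         EE SEmax = B * SEmax / (P0 + gamma * Pmax powr alpha)"
proof -
  define Rm where "Rm = Rmax sigma2 Pmax"
  have Rt_eq: "Rt = Rm" and Rm_pos: "0 < Rm"
    using assms Rmax_pos[OF sigma2_pos Pmax_pos] by (simp_all add: Rtilde_def Rm_def)
  have "Pmax powr alpha = sigma2 powr alpha * (2 powr Rm - 1) powr alpha"
    using Pa_powr[OF sigma2_pos, of Rm alpha] Pa_Rmax[OF sigma2_pos Pmax_pos] Rm_pos
    by (simp add: Rm_def)
  moreover have "EE SE \<le> EE SEmax" if "SE \<in> {0<..SEmax}" for SE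
    using EE_le_EE_max_Rt[of SE] that SEmax_range_iff[of SE]
    by (simp add: Rt_eq Rm_def max_absorb2)
  ultimately show ?thesis
    using EE_from_Rt[of Rm] Rm_pos by (simp add: Rt_eq Rm_def mult.assoc)
qed

lemma EE_max_at_gbar_minimiser:
  assumes "Ra < Rmax sigma2 Pmax" "Ra \<le> Rbar" "Rbar \<le> Rmax sigma2 Pmax" "0 < Rbar"
    and Rbar_min: "\<forall>x. Ra \<le> x \<and> x \<le> Rmax sigma2 Pmax \<and> 0 < x \<longrightarrow>
                   gbar sigma2 alpha gamma P0 Rbar \<le> gbar sigma2 alpha gamma P0 x"
  shows "Rbar / c \<in> {0<..SEmax} \<and> (\<forall>SE\<in>{0<..SEmax}. EE SE \<le> EE (Rbar / c)) \<and>
         EE (Rbar / c) = B * (Rbar / c) /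
           (P0 + gamma * sigma2 powr alpha * (2 powr Rbar - 1) powr alpha)"
proof (intro conjI ballI)
  have Rt_eq: "Rt = Ra" using assms by (simp add: Rtilde_def)
  show "Rbar / c \<in> {0<..SEmax}"
    using assms c_pos by (simp add: divide_right_mono)
  show "EE (Rbar / c) = B * (Rbar / c) /
          (P0 + gamma * sigma2 powr alpha * (2 powr Rbar - 1) powr alpha)"
    using EE_from_Rt assms by (simp add: Rt_eq)
  fix SE assume "SE \<in> {0<..SEmax}"
  then have "0 < SE" "SE * c \<le> Rmax sigma2 Pmax"
    using SEmax_range_iff by auto
  define x where "x = max (SE * c) Ra"
  have "0 < x" using \<open>0 < SE\<close> c_pos by (simp add: x_def less_max_iff_disj)
  have "EE SE \<le> EE (x / c)"
    using EE_le_EE_max_Rt \<open>0 < SE\<close> by (simp add: x_def Rt_eq)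
  also have "\<dots> \<le> EE (Rbar / c)"
    using EE_le_of_gbar_le[of x Rbar] Rbar_min assms \<open>0 < x\<close> \<open>SE * c \<le> Rmax sigma2 Pmax\<close>
    by (simp add: x_def Rt_eq)
  finally show "EE SE \<le> EE (Rbar / c)" .
qed

end

theorem corollary2:
  fixes T arol sigma2 Pmax alpha gamma P0 Psleep Ra :: real
  assumes "T > 0" and "0 \<le> arol" and "arol \<le> 1"
    and "sigma2 > 0" and "Pmax > 0"
    and "0 < alpha" and "alpha \<le> 1" and "gamma > 0"
    and "0 \<le> Psleep" and "Psleep \<le> P0"
    and "is_Ra sigma2 alpha gamma P0 Psleep Ra"
  defines "EE \<equiv> EE_inf T arol sigma2 Pmax alpha gamma P0 Psleep Ra"
    and "SEmax \<equiv> Rmax sigma2 Pmax / (1 + arol)"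
  shows "(Ra \<ge> Rmax sigma2 Pmax \<longrightarrow>
            (\<forall>SE\<in>{0<..SEmax}. EE SE \<le> EE SEmax) \<and>
            EE SEmax = bandwidth T arol * SEmax / (P0 + gamma * Pmax powr alpha))
       \<and> (Ra < Rmax sigma2 Pmax \<longrightarrow>
            (\<forall>Rbar. Ra \<le> Rbar \<and> Rbar \<le> Rmax sigma2 Pmax \<and> 0 < Rbar \<and>
                (\<forall>x. Ra \<le> x \<and> x \<le> Rmax sigma2 Pmax \<and> 0 < x \<longrightarrow>
                     gbar sigma2 alpha gamma P0 Rbar \<le> gbar sigma2 alpha gamma P0 x)
              \<longrightarrow> (let SEbar = Rbar / (1 + arol) in
                     SEbar \<in> {0<..SEmax} \<and>
                     (\<forall>SE\<in>{0<..SEmax}. EE SE \<le> EE SEbar) \<and>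
                     EE SEbar = bandwidth T arol * SEbar /
                       (P0 + gamma * sigma2 powr alpha * (2 powr Rbar - 1) powr alpha))))"
proof -
  interpret ee_setting T arol sigma2 Pmax alpha gamma P0 Psleep Ra
    using assms is_Ra_nonneg by unfold_locales auto
  show ?thesis
    using EE_max_at_SEmax EE_max_at_gbar_minimiser
    unfolding EE_def SEmax_def Let_def by blast
qed

end
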